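(* Let $\mathcal{G}$ be an étale groupoid injectively graded by a countable discrete abelian group $A$ via $\Phi:\mathcal{G}\to A$, let $c:\mathcal{G}\to\mathbb{R}$ be a continuous groupoid homomorphism, $\beta\in\mathbb{R}$, and let $\mu\in\Delta(e^{-\beta c})\setminus\{0\}$ be ergodic. Then: (1) for every subgroup $C\subseteq A$, the set $X(C)=\{x\in\mathcal{G}^{(0)}:\Phi(\mathcal{G}^x_x)=C\}$ is Borel and invariant; (2) there is a unique subgroup $B\subseteq A$ with $\mu(\mathcal{G}^{(0)}\setminus X(B))=0$; (3) for $x\in X(B)$ let $\Phi_x:C^*(\mathcal{G}^x_x)\to C^*(B)$ be the isomorphism induced by $\Phi|_{\mathcal{G}^x_x}$ ($u_g\mapsto u_{\Phi(g)}$); if $\{\varphi_x\}_{x\in\mathcal{G}^{(0)}}$ is a $\mu$-measurable field of states with $\varphi_x(u_g)=\varphi_{r(h)}(u_{hgh^{-1}})$ for $\mu$-a.e. $x$ and all $g\in\mathcal{G}^x_x$, $h\in\mathcal{G}_x$, then there is a state $\varphi$ on $C^*(B)$ such that $\varphi\circ\Phi_x=\varphi_x$ for $\mu$-a.e. $x\in X(B)$.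
   Context: Étale groupoid: locally compact second countable Hausdorff groupoid with range $r$, source $s$ local homeomorphisms; $\mathcal{G}_x=s^{-1}(x)$, $\mathcal{G}^x_x=r^{-1}(x)\cap s^{-1}(x)$. $\mathcal{G}$ is injectively graded by $A$ via $\Phi$ if $\Phi:\mathcal{G}\to A$ is a continuous groupoid homomorphism with $\ker(\Phi)\cap\mathcal{G}^x_x=\{x\}$ for all $x\in\mathcal{G}^{(0)}$. $\Delta(e^{-\beta c})$: regular Borel measures on $\mathcal{G}^{(0)}$ quasi-invariant with Radon–Nikodym cocycle $e^{-\beta c}$, i.e. $\mu_r\sim\mu_s$ and $d\mu_r/d\mu_s=e^{-\beta c}$, where $\int f\,d\mu_r=\int\sum_{g\in r^{-1}(x)}f(g)\,d\mu(x)$, $\int f\,d\mu_s=\int\sum_{g\in s^{-1}(x)}f(g)\,d\mu(x)$ for $f\in C_c(\mathcal{G})$. A set $Y\subseteq\mathcal{G}^{(0)}$ is invariant if $Y=r(s^{-1}(Y))$; $\mu$ is ergodic if every invariant Borel set is null or conull. $u_g$ denote canonical unitaries in group $C^*$-algebras. A $\mu$-measurable field of states is a family of states $\varphi_x$ on $C^*(\mathcal{G}^x_x)$ with $x\mapsto\sum_{g\in\mathcal{G}^x_x}f(g)\varphi_x(u_g)$ $\mu$-measurable for all $f\in C_c(\mathcal{G})$. *)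

theory Defs
  imports "HOL-Analysis.Analysis"
begin

text \<open>An etale groupoid is modelled on the whole type 'g (the arrows), with a
unit space G0, range r, source s, multiplication mul (g h is defined iff s g = r h;
mul is an arbitrary total function outside composable pairs) and inversion iv.
The topology of 'g is the type's topology; second countability and Hausdorffness
are type-class constraints in the theorem; local compactness is assumed below.\<close>

definition local_homeo_onto :: "('g::topological_space \<Rightarrow> 'g) \<Rightarrow> 'g set \<Rightarrow> bool" where
  "local_homeo_onto f G0 \<longleftrightarrow>
     (\<forall>g. \<exists>U V h. open U \<and> g \<in> U \<and> openin (top_of_set G0) V \<and> homeomorphism U V f h)"

definition etale_groupoid ::
  "'g::topological_space set \<Rightarrow> ('g \<Rightarrow> 'g) \<Rightarrow> ('g \<Rightarrow> 'g) \<Rightarrow> ('g \<Rightarrow> 'g \<Rightarrow> 'g) \<Rightarrow> ('g \<Rightarrow> 'g) \<Rightarrow> bool"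
  where
  "etale_groupoid G0 r s mul iv \<longleftrightarrow>
     (\<forall>g. r g \<in> G0 \<and> s g \<in> G0) \<and>
     (\<forall>x\<in>G0. r x = x \<and> s x = x) \<and>
     (\<forall>g h. s g = r h \<longrightarrow> r (mul g h) = r g \<and> s (mul g h) = s h) \<and>
     (\<forall>g h k. s g = r h \<and> s h = r k \<longrightarrow> mul (mul g h) k = mul g (mul h k)) \<and>
     (\<forall>g. mul (r g) g = g \<and> mul g (s g) = g) \<and>
     (\<forall>g. r (iv g) = s g \<and> s (iv g) = r g \<and> mul g (iv g) = r g \<and> mul (iv g) g = s g) \<and>
     locally_compact_space (euclidean :: 'g topology) \<and>
     continuous_on {(g, h). s g = r h} (\<lambda>(g, h). mul g h) \<and>
     continuous_on UNIV iv \<and>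
     local_homeo_onto r G0 \<and> local_homeo_onto s G0"

definition isotropy :: "('g \<Rightarrow> 'g) \<Rightarrow> ('g \<Rightarrow> 'g) \<Rightarrow> 'g \<Rightarrow> 'g set" where
  "isotropy r s x = {g. r g = x \<and> s g = x}"

definition groupoid_hom ::
  "('g \<Rightarrow> 'g) \<Rightarrow> ('g \<Rightarrow> 'g) \<Rightarrow> ('g \<Rightarrow> 'g \<Rightarrow> 'g) \<Rightarrow> ('g \<Rightarrow> 'a::ab_group_add) \<Rightarrow> bool" where
  "groupoid_hom r s mul F \<longleftrightarrow> (\<forall>g h. s g = r h \<longrightarrow> F (mul g h) = F g + F h)"

text \<open>Injective grading by a (countable) discrete abelian group A: Phi is continuous into
the discrete topology on A (i.e. every fibre is open), a groupoid homomorphism, and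
its kernel meets each isotropy group only in the unit.\<close>
definition injectively_graded ::
  "'g::topological_space set \<Rightarrow> ('g \<Rightarrow> 'g) \<Rightarrow> ('g \<Rightarrow> 'g) \<Rightarrow> ('g \<Rightarrow> 'g \<Rightarrow> 'g) \<Rightarrow> ('g \<Rightarrow> 'a::ab_group_add) \<Rightarrow> bool"
  where
  "injectively_graded G0 r s mul Phi \<longleftrightarrow>
     (\<forall>a. open (Phi -` {a})) \<and> groupoid_hom r s mul Phi \<and>
     (\<forall>x\<in>G0. {g \<in> isotropy r s x. Phi g = 0} = {x})"

definition subgroup_of :: "'a::ab_group_add set \<Rightarrow> bool" where
  "subgroup_of C \<longleftrightarrow> 0 \<in> C \<and> (\<forall>a\<in>C. \<forall>b\<in>C. a + b \<in> C \<and> - a \<in> C)"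

definition Cc :: "('g::topological_space \<Rightarrow> complex) \<Rightarrow> bool" where
  "Cc f \<longleftrightarrow> continuous_on UNIV f \<and> compact (closure {g. f g \<noteq> 0})"

definition invariant_set :: "('g \<Rightarrow> 'g) \<Rightarrow> ('g \<Rightarrow> 'g) \<Rightarrow> 'g set \<Rightarrow> bool" where
  "invariant_set r s Y \<longleftrightarrow> Y = r ` (s -` Y)"

definition regular_borel_on :: "'g::topological_space set \<Rightarrow> 'g measure \<Rightarrow> bool" where
  "regular_borel_on G0 \<mu> \<longleftrightarrow>
     space \<mu> = G0 \<and> sets \<mu> = sets (restrict_space borel G0) \<and>
     (\<forall>K. compact K \<and> K \<subseteq> G0 \<longrightarrow> emeasure \<mu> K < \<infinity>) \<and>
     (\<forall>E\<in>sets \<mu>. emeasure \<mu> E =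
        (INF U\<in>{U. openin (top_of_set G0) U \<and> E \<subseteq> U}. emeasure \<mu> U)) \<and>
     (\<forall>U. openin (top_of_set G0) U \<longrightarrow> emeasure \<mu> U =
        (SUP K\<in>{K. compact K \<and> K \<subseteq> U}. emeasure \<mu> K))"

definition Delta ::
  "'g::topological_space set \<Rightarrow> ('g \<Rightarrow> 'g) \<Rightarrow> ('g \<Rightarrow> 'g) \<Rightarrow> ('g \<Rightarrow> real) \<Rightarrow> real \<Rightarrow> 'g measure \<Rightarrow> bool"
  where
  "Delta G0 r s c \<beta> \<mu> \<longleftrightarrow> regular_borel_on G0 \<mu> \<and>
     (\<forall>f. Cc f \<longrightarrow>
        integral\<^sup>L \<mu> (\<lambda>x. infsum f (r -` {x}))
        = integral\<^sup>L \<mu> (\<lambda>x. infsum (\<lambda>g. f g * complex_of_real (exp (- \<beta> * c g))) (s -` {x})))"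

definition ergodic :: "'g set \<Rightarrow> ('g \<Rightarrow> 'g) \<Rightarrow> ('g \<Rightarrow> 'g) \<Rightarrow> 'g measure \<Rightarrow> bool" where
  "ergodic G0 r s \<mu> \<longleftrightarrow>
     (\<forall>Y\<in>sets \<mu>. invariant_set r s Y \<longrightarrow> emeasure \<mu> Y = 0 \<or> emeasure \<mu> (G0 - Y) = 0)"

text \<open>A state on the full group C*-algebra C*(H) of a discrete group H
(with product mul, inverse iv, unit e) is represented by its values psi h = state(u_h);
these are exactly the normalized positive definite functions on H.\<close>
definition group_state :: "'x set \<Rightarrow> ('x \<Rightarrow> 'x \<Rightarrow> 'x) \<Rightarrow> ('x \<Rightarrow> 'x) \<Rightarrow> 'x \<Rightarrow> ('x \<Rightarrow> complex) \<Rightarrow> bool"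
  where
  "group_state H mul iv e \<psi> \<longleftrightarrow> \<psi> e = 1 \<and>
     (\<forall>n (hs :: nat \<Rightarrow> 'x) (cs :: nat \<Rightarrow> complex). (\<forall>i<n. hs i \<in> H) \<longrightarrow>
        (let S = (\<Sum>i<n. \<Sum>j<n. cs i * cnj (cs j) * \<psi> (mul (iv (hs j)) (hs i)))
         in S \<in> \<real> \<and> 0 \<le> Re S))"

definition X_set :: "'g set \<Rightarrow> ('g \<Rightarrow> 'g) \<Rightarrow> ('g \<Rightarrow> 'g) \<Rightarrow> ('g \<Rightarrow> 'a) \<Rightarrow> 'a set \<Rightarrow> 'g set" where
  "X_set G0 r s Phi C = {x\<in>G0. Phi ` isotropy r s x = C}"

text \<open>mu-measurable field of states: phi x g = phi_x(u_g) for g in the isotropy at x.\<close>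
definition measurable_state_field ::
  "'g::topological_space set \<Rightarrow> ('g \<Rightarrow> 'g) \<Rightarrow> ('g \<Rightarrow> 'g) \<Rightarrow> ('g \<Rightarrow> 'g \<Rightarrow> 'g) \<Rightarrow> ('g \<Rightarrow> 'g)
     \<Rightarrow> 'g measure \<Rightarrow> ('g \<Rightarrow> 'g \<Rightarrow> complex) \<Rightarrow> bool" where
  "measurable_state_field G0 r s mul iv \<mu> \<phi> \<longleftrightarrow>
     (\<forall>x\<in>G0. group_state (isotropy r s x) mul iv x (\<phi> x)) \<and>
     (\<forall>f. Cc f \<longrightarrow>
        (\<lambda>x. infsum (\<lambda>g. f g * \<phi> x g) (isotropy r s x)) \<in> borel_measurable (completion \<mu>))"

end

(*
  The grading detects isotropy: Phi is injective on every isotropy group, and since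
  conjugation by an arrow h maps the isotropy at s h onto the isotropy at r h preserving
  grades, the subgroup Phi(G^x_x) is constant along orbits. For each grade a the set of
  units whose isotropy contains an element of grade a is the image under the local
  homeomorphism r of a Borel set, hence Borel, and it is invariant; by ergodicity it is
  null or conull. The grades with conull sets form the subgroup B, and X(B) is conull
  as a countable intersection.

  For a field of states, transport phi_x along Phi to the function b |-> phi_x(u_g) with
  Phi g = b. Conjugation invariance makes it invariant off a null set, so, as ergodicity
  extends to such sets of the completion, it is almost everywhere a constant psi(b).
  Evaluated at one point of X(B), psi is phi_x composed with the isomorphism Phi_x^-1,
  hence a state of C*(B).
*)
theory Submission
  imports Defs
begin

lemma borel_image_homeomorphism:
  fixes f :: "'a::topological_space \<Rightarrow> 'b::topological_space"
  assumes "homeomorphism U V f h" and "V \<in> sets borel" and "E \<in> sets borel" and "E \<subseteq> U"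
  shows "f ` E \<in> sets borel"
proof -
  have "f ` E = h -` E \<inter> space (restrict_space borel V)"
    using assms(1,4) unfolding homeomorphism_def space_restrict_space by auto
  moreover have "h \<in> borel_measurable (restrict_space borel V)"
    using assms(1) homeomorphism_cont2 by (blast intro: borel_measurable_continuous_on_restrict)
  ultimately have "f ` E \<in> sets (restrict_space borel V)"
    using assms(3) by (simp add: measurable_sets)
  then show ?thesis
    using assms(2) by (simp add: sets_restrict_space_iff)
qed

lemma continuous_on_local_homeo_onto:
  fixes f :: "'a::t2_space \<Rightarrow> 'a"
  assumes "local_homeo_onto f S"
  shows "continuous_on UNIV f"
proof -
  have "isCont f g" for g
  proof -
    obtain U V h where "open U" "g \<in> U" "homeomorphism U V f h"
      using assms unfolding local_homeo_onto_def by blast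
    then show ?thesis
      by (meson continuous_on_eq_continuous_at homeomorphism_cont1)
  qed
  then show ?thesis
    by (simp add: continuous_at_imp_continuous_on)
qed

lemma borel_image_local_homeo_onto:
  fixes f :: "'a::second_countable_topology \<Rightarrow> 'a"
  assumes "local_homeo_onto f S" and "S \<in> sets borel" and "Z \<in> sets borel"
  shows "f ` Z \<in> sets borel"
proof -
  let ?\<U> = "{U. open U \<and> (\<exists>V h. openin (top_of_set S) V \<and> homeomorphism U V f h)}"
  obtain \<U>' where \<U>': "\<U>' \<subseteq> ?\<U>" "countable \<U>'" "\<Union>\<U>' = \<Union>?\<U>"
    using Lindelof[of ?\<U>] by blast
  have "g \<in> \<Union>?\<U>" for g
  proof -
    obtain U V h where "open U" "g \<in> U" "openin (top_of_set S) V" "homeomorphism U V f h"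
      using assms(1) unfolding local_homeo_onto_def by blast
    then show ?thesis
      by blast
  qed
  then have cover: "\<Union>\<U>' = UNIV"
    using \<U>'(3) by blast
  have "f ` Z = (\<Union>U\<in>\<U>'. f ` (U \<inter> Z))"
  proof (intro equalityI subsetI)
    fix y assume "y \<in> f ` Z"
    then obtain z where "z \<in> Z" "y = f z"
      by blast
    moreover have "z \<in> \<Union>\<U>'"
      using cover by simp
    then obtain U where "U \<in> \<U>'" "z \<in> U"
      by (rule UnionE)
    ultimately show "y \<in> (\<Union>U\<in>\<U>'. f ` (U \<inter> Z))"
      by (intro UN_I[of U]) auto
  qed blast
  moreover have "(\<Union>U\<in>\<U>'. f ` (U \<inter> Z)) \<in> sets borel"
  proof (rule sets.countable_UN''[OF \<U>'(2)])
    fix U assume "U \<in> \<U>'"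
    with \<U>'(1) have "U \<in> ?\<U>"
      by (rule subsetD)
    then obtain V h where "open U" "openin (top_of_set S) V" "homeomorphism U V f h"
      by blast
    moreover from this(2) obtain T where "open T" "V = S \<inter> T"
      unfolding openin_open by blast
    ultimately show "f ` (U \<inter> Z) \<in> sets borel"
      using assms(2,3) by (intro borel_image_homeomorphism[of U V f h]) auto
  qed
  ultimately show ?thesis
    by simp
qed

lemma Hausdorff_space_euclidean_t2: "Hausdorff_space (euclidean :: 'a::t2_space topology)"
  unfolding Hausdorff_space_def disjnt_def by (metis hausdorff open_openin)

lemma second_countable_euclidean: "second_countable (euclidean :: 'a::second_countable_topology topology)"
  unfolding second_countable_def
  by (metis ex_countable_basis open_openin topological_basisE topological_basis_open)

lemma normal_space_euclidean_locally_compact: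
  assumes "locally_compact_space (euclidean :: 'a::{t2_space, second_countable_topology} topology)"
  shows "normal_space (euclidean :: 'a topology)"
  using assms Hausdorff_space_euclidean_t2 locally_compact_Hausdorff_imp_regular_space
    regular_Lindelof_imp_normal_space second_countable_euclidean second_countable_imp_Lindelof_space
  by blast

lemma AE_imp_ex_in_space:
  assumes "AE x in M. P x" and "emeasure M (space M) \<noteq> 0"
  shows "\<exists>x\<in>space M. P x"
proof (rule ccontr)
  assume "\<not> (\<exists>x\<in>space M. P x)"
  with assms(1) have "AE x in M. False"
    by (auto elim: AE_mp[OF AE_space])
  then show False
    using assms(2) ae_filter_eq_bot_iff trivial_limit_def by metis
qed

lemma topological_basis_separates:
  fixes a b :: "'b::t0_space"
  assumes "topological_basis \<B>" and "\<forall>V\<in>\<B>. a \<in> V \<longleftrightarrow> b \<in> V"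
  shows "a = b"
proof (rule ccontr)
  assume "a \<noteq> b"
  then obtain U where "open U" "a \<in> U \<and> b \<notin> U \<or> b \<in> U \<and> a \<notin> U"
    using separation_t0 by blast
  then show False
    using topological_basisE[OF assms(1) \<open>open U\<close>] assms(2) by (metis subsetD)
qed

lemma AE_eq_const_of_zero_one:
  fixes F :: "'x \<Rightarrow> 'b::{t0_space, second_countable_topology}"
  assumes zero_one: "\<And>S. open S \<Longrightarrow> (AE x in M. F x \<in> S) \<or> (AE x in M. F x \<notin> S)"
    and "emeasure M (space M) \<noteq> 0"
  shows "\<exists>c. AE x in M. F x = c"
proof -
  obtain \<B> :: "'b set set" where \<B>: "countable \<B>" "topological_basis \<B>"
    using ex_countable_basis by blast
  have "AE x in M. F x \<in> V \<longleftrightarrow> (AE y in M. F y \<in> V)" if "V \<in> \<B>" for V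
  proof (cases "AE y in M. F y \<in> V")
    case True
    then show ?thesis
      by eventually_elim (simp add: True)
  next
    case False
    with zero_one[OF topological_basis_open[OF \<B>(2) that]] have "AE y in M. F y \<notin> V"
      by blast
    then show ?thesis
      by eventually_elim (simp add: False)
  qed
  then have AE_basis: "AE x in M. \<forall>V\<in>\<B>. F x \<in> V \<longleftrightarrow> (AE y in M. F y \<in> V)"
    using \<B>(1) by (simp add: AE_ball_countable)
  then obtain x0 where x0: "\<forall>V\<in>\<B>. F x0 \<in> V \<longleftrightarrow> (AE y in M. F y \<in> V)"
    using AE_imp_ex_in_space assms(2) by blast
  from AE_basis have "AE x in M. F x = F x0"
  proof eventually_elim
    case (elim x)
    then show ?case
      using x0 by (intro topological_basis_separates[OF \<B>(2)]) simp
  qed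
  then show ?thesis
    by blast
qed

section \<open>Compactly supported functions approximating an open set\<close>

definition compactly_supported :: "('a::topological_space \<Rightarrow> real) \<Rightarrow> bool" where
  "compactly_supported f \<longleftrightarrow> continuous_on UNIV f \<and> compact (closure {x. f x \<noteq> 0})"

lemma Cc_of_real_compactly_supported:
  "compactly_supported f \<Longrightarrow> Cc (\<lambda>x. complex_of_real (f x))"
  unfolding compactly_supported_def Cc_def by (auto intro: continuous_intros)

lemma compactly_supported_max:
  assumes "compactly_supported f" and "compactly_supported g"
  shows "compactly_supported (\<lambda>x. max (f x) (g x))"
proof -
  have "closure {x. max (f x) (g x) \<noteq> 0} \<subseteq> closure {x. f x \<noteq> 0} \<union> closure {x. g x \<noteq> 0}"
    unfolding closure_Un[symmetric] by (rule closure_mono) (auto simp: max_def)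
  moreover have "compact (closure {x. f x \<noteq> 0} \<union> closure {x. g x \<noteq> 0})"
    using assms unfolding compactly_supported_def by blast
  ultimately have "compact (closure {x. max (f x) (g x) \<noteq> 0})"
    by (metis Int_absorb1 closed_closure compact_Int_closed)
  then show ?thesis
    using assms unfolding compactly_supported_def by (simp add: continuous_on_max)
qed

lemma compactly_supported_Max:
  assumes "finite I" and "I \<noteq> {}" and "\<And>i. i \<in> I \<Longrightarrow> compactly_supported (f i)"
  shows "compactly_supported (\<lambda>x. Max ((\<lambda>i. f i x) ` I))"
  using assms
proof (induction I rule: finite_ne_induct)
  case (insert i I)
  then show ?case
    using compactly_supported_max[of "f i" "\<lambda>x. Max ((\<lambda>i. f i x) ` I)"] by simp
qed simp

definition bump_function :: "'a::topological_space set \<Rightarrow> 'a set \<Rightarrow> ('a \<Rightarrow> real) \<Rightarrow> bool" where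
  "bump_function W U f \<longleftrightarrow> open U \<and> (\<forall>y\<in>U. f y = 1) \<and> (\<forall>y. y \<notin> W \<longrightarrow> f y = 0)
    \<and> compactly_supported f \<and> (\<forall>y. f y \<in> {0..1})"

lemma ex_bump_function:
  fixes W :: "'a::{t2_space, second_countable_topology} set"
  assumes lc: "locally_compact_space (euclidean :: 'a topology)" and "open W" and "g \<in> W"
  shows "\<exists>U f. g \<in> U \<and> bump_function W U f"
proof -
  have "neighbourhood_base_of (compactin euclidean) (euclidean :: 'a topology)"
    using lc Hausdorff_space_euclidean_t2 locally_compact_space_neighbourhood_base by blast
  then have "\<exists>V K. openin euclidean V \<and> compactin euclidean K \<and> g \<in> V \<and> V \<subseteq> K \<and> K \<subseteq> W"
    unfolding neighbourhood_base_of using assms(2,3) by simp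
  then obtain V K where V: "open V" "compact K" "g \<in> V" "V \<subseteq> K" "K \<subseteq> W"
    by auto
  have "regular_space (euclidean :: 'a topology)"
    using lc Hausdorff_space_euclidean_t2 locally_compact_Hausdorff_imp_regular_space by blast
  then have "\<exists>U C. openin euclidean U \<and> closedin euclidean C \<and> g \<in> U \<and> U \<subseteq> C \<and> C \<subseteq> V"
    unfolding neighbourhood_base_of_closedin[symmetric] neighbourhood_base_of using V(1,3) by simp
  then obtain U C where U: "open U" "closed C" "g \<in> U" "U \<subseteq> C" "C \<subseteq> V"
    by auto
  obtain f where f: "continuous_map euclidean (top_of_set {0..1::real}) f"
    "f ` (- V) \<subseteq> {0}" "f ` C \<subseteq> {1}"
    using Urysohn_lemma[OF normal_space_euclidean_locally_compact[OF lc], of "- V" C 0 1] U V(1)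
    by (auto simp: disjnt_def)
  have "closure {y. f y \<noteq> 0} \<subseteq> K"
    using f(2) V(2,4) by (intro closure_minimal) (auto simp: compact_imp_closed)
  then have "compact (closure {y. f y \<noteq> 0})"
    using V(2) by (metis Int_absorb1 closed_closure compact_Int_closed)
  moreover have "continuous_on UNIV f"
    using f(1) by (simp add: continuous_map_in_subtopology)
  ultimately have "compactly_supported f"
    unfolding compactly_supported_def by blast
  moreover have "f y \<in> {0..1}" for y
    using f(1) by (auto simp: continuous_map_in_subtopology)
  moreover have "\<forall>y\<in>U. f y = 1" "\<forall>y. y \<notin> W \<longrightarrow> f y = 0"
    using U(4) V(4,5) f(2,3) by (auto simp: image_subset_iff subset_eq)
  ultimately show ?thesis
    using U(1,3) unfolding bump_function_def by blast
qed

lemma ex_bump_function_cover: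
  fixes W :: "'a::{t2_space, second_countable_topology} set"
  assumes lc: "locally_compact_space (euclidean :: 'a topology)" and "open W"
  shows "\<exists>U f. (\<forall>n::nat. bump_function W (U n) (f n)) \<and> (\<Union>n. U n) = W"
proof -
  let ?\<U> = "{U. \<exists>f. bump_function W U f}"
  have "\<Union>?\<U> = W"
  proof
    show "\<Union>?\<U> \<subseteq> W"
      unfolding bump_function_def by fastforce
    show "W \<subseteq> \<Union>?\<U>"
    proof
      fix y assume "y \<in> W"
      then obtain U f where "y \<in> U" "bump_function W U f"
        using ex_bump_function[OF lc \<open>open W\<close>] by blast
      then show "y \<in> \<Union>?\<U>"
        by blast
    qed
  qed
  moreover obtain \<U>' where "\<U>' \<subseteq> ?\<U>" "countable \<U>'" "\<Union>\<U>' = \<Union>?\<U>"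
    by (rule Lindelof[of ?\<U>, THEN exE]) (auto simp: bump_function_def)
  moreover have "bump_function W {} (\<lambda>_. 0)"
    unfolding bump_function_def compactly_supported_def by simp
  \<comment> \<open>Adding the empty set makes the countable subcover nonempty, so it can be enumerated.\<close>
  ultimately have "insert {} \<U>' \<subseteq> ?\<U>" "countable (insert {} \<U>')" "\<Union>(insert {} \<U>') = W"
    by blast+
  moreover obtain U :: "nat \<Rightarrow> 'a set" where "range U = insert {} \<U>'"
    using range_from_nat_into[OF insert_not_empty \<open>countable \<U>'\<close>[THEN countable_insert]] by blast
  ultimately have "range U \<subseteq> ?\<U>" "(\<Union>n. U n) = W"
    by simp_all
  then have "\<forall>n. \<exists>f. bump_function W (U n) f" and U: "(\<Union>n. U n) = W"
    by blast+
  then obtain f where "\<forall>n. bump_function W (U n) (f n)"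
    by metis
  with U show ?thesis
    by blast
qed

lemma Cc_eventually_one_on_open:
  fixes W :: "'a::{t2_space, second_countable_topology} set"
  assumes lc: "locally_compact_space (euclidean :: 'a topology)" and "open W"
  obtains F :: "nat \<Rightarrow> 'a \<Rightarrow> complex"
  where "\<And>k. Cc (F k)" "\<And>k y. y \<notin> W \<Longrightarrow> F k y = 0"
    "\<And>y. y \<in> W \<Longrightarrow> \<forall>\<^sub>F k in sequentially. F k y = 1"
proof -
  obtain U f where f: "\<And>n::nat. bump_function W (U n) (f n)" and U: "(\<Union>n. U n) = W"
    using ex_bump_function_cover[OF assms] by blast
  define M where "M k y = Max ((\<lambda>n. f n y) ` {..k})" for k y
  have "compactly_supported (M k)" for k
    unfolding M_def[abs_def] using f by (intro compactly_supported_Max) (auto simp: bump_function_def)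
  moreover have "M k y = 0" if "y \<notin> W" for k y
    using f that unfolding M_def bump_function_def by simp
  moreover have "\<forall>\<^sub>F k in sequentially. M k y = 1" if "y \<in> W" for y
  proof -
    obtain n where "y \<in> U n"
      using U \<open>y \<in> W\<close> by blast
    have "M k y = 1" if "n \<le> k" for k
    proof (rule antisym)
      show "M k y \<le> 1"
        using f unfolding M_def bump_function_def by (simp add: Max_le_iff)
      show "1 \<le> M k y"
        using f \<open>y \<in> U n\<close> that unfolding M_def bump_function_def by (force simp: Max_ge_iff)
    qed
    then show ?thesis
      unfolding eventually_sequentially by blast
  qed
  ultimately show thesis
    by (intro that[of "\<lambda>k y. complex_of_real (M k y)"] Cc_of_real_compactly_supported)
      (auto elim: eventually_mono)
qed

section \<open>Etale groupoids\<close>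

locale etale_groupoid_space =
  fixes G0 :: "'g::{t2_space, second_countable_topology} set"
    and r s :: "'g \<Rightarrow> 'g" and mul :: "'g \<Rightarrow> 'g \<Rightarrow> 'g" and iv :: "'g \<Rightarrow> 'g"
  assumes etale: "etale_groupoid G0 r s mul iv"
begin

lemma range_in_units [simp]: "r g \<in> G0"
  and source_in_units [simp]: "s g \<in> G0"
  and range_unit [simp]: "x \<in> G0 \<Longrightarrow> r x = x"
  and source_unit [simp]: "x \<in> G0 \<Longrightarrow> s x = x"
  and range_mul: "s g = r h \<Longrightarrow> r (mul g h) = r g"
  and source_mul: "s g = r h \<Longrightarrow> s (mul g h) = s h"
  and mul_assoc: "s g = r h \<Longrightarrow> s h = r k \<Longrightarrow> mul (mul g h) k = mul g (mul h k)"
  and mul_range_left [simp]: "mul (r g) g = g"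
  and mul_source_right [simp]: "mul g (s g) = g"
  and range_iv [simp]: "r (iv g) = s g"
  and source_iv [simp]: "s (iv g) = r g"
  and mul_iv_right [simp]: "mul g (iv g) = r g"
  using etale unfolding etale_groupoid_def by auto

lemma locally_compact: "locally_compact_space (euclidean :: 'g topology)"
  using etale unfolding etale_groupoid_def by blast

lemma local_homeo_range: "local_homeo_onto r G0"
  and local_homeo_source: "local_homeo_onto s G0"
  using etale unfolding etale_groupoid_def by simp_all

lemma continuous_range: "continuous_on UNIV r"
  and continuous_source: "continuous_on UNIV s"
  using continuous_on_local_homeo_onto local_homeo_range local_homeo_source by simp_all

lemma borel_units [measurable]: "G0 \<in> sets borel"
proof -
  have "{g. r g = g} = G0"
    by (metis (mono_tags) Collect_cong Collect_mem_eq range_in_units range_unit)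
  moreover have "closed {g. r g = g}"
    using closed_Collect_eq[OF continuous_range continuous_on_id] by simp
  ultimately show ?thesis
    by (metis borel_closed)
qed

lemma borel_image_range: "Z \<in> sets borel \<Longrightarrow> r ` Z \<in> sets borel"
  by (rule borel_image_local_homeo_onto[OF local_homeo_range borel_units])

lemma invariant_set_subset_units:
  assumes "invariant_set r s Y"
  shows "Y \<subseteq> G0"
proof -
  have "Y = r ` (s -` Y)"
    using assms unfolding invariant_set_def .
  also have "\<dots> \<subseteq> G0"
    by auto
  finally show ?thesis .
qed

lemma invariant_set_saturation: "invariant_set r s (r ` (s -` Y))"
  unfolding invariant_set_def
proof (intro equalityI subsetI)
  fix y assume "y \<in> r ` (s -` Y)"
  moreover from this have "y \<in> G0"
    by auto
  ultimately show "y \<in> r ` (s -` (r ` (s -` Y)))"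
    by (intro rev_image_eqI[of y]) simp_all
next
  fix y assume "y \<in> r ` (s -` (r ` (s -` Y)))"
  then obtain k h where "y = r k" "s k = r h" "s h \<in> Y"
    by blast
  then show "y \<in> r ` (s -` Y)"
    by (intro rev_image_eqI[of "mul k h"]) (simp_all add: range_mul source_mul)
qed

lemma invariant_set_Collect:
  assumes "\<And>h. P (r h) \<longleftrightarrow> P (s h)"
  shows "invariant_set r s {x \<in> G0. P x}"
  unfolding invariant_set_def
proof (intro equalityI subsetI)
  fix y assume "y \<in> {x \<in> G0. P x}"
  then show "y \<in> r ` (s -` {x \<in> G0. P x})"
    by (intro rev_image_eqI[of y]) simp_all
next
  fix y assume "y \<in> r ` (s -` {x \<in> G0. P x})"
  then show "y \<in> {x \<in> G0. P x}"
    using assms by auto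
qed

lemma isotropy_eq_empty: "x \<notin> G0 \<Longrightarrow> isotropy r s x = {}"
  unfolding isotropy_def using range_in_units by blast

lemma unit_in_isotropy: "x \<in> G0 \<Longrightarrow> x \<in> isotropy r s x"
  unfolding isotropy_def by simp

lemma mul_in_isotropy: "g \<in> isotropy r s x \<Longrightarrow> h \<in> isotropy r s x \<Longrightarrow> mul g h \<in> isotropy r s x"
  unfolding isotropy_def by (simp add: range_mul source_mul)

lemma iv_in_isotropy: "g \<in> isotropy r s x \<Longrightarrow> iv g \<in> isotropy r s x"
  unfolding isotropy_def by simp

lemma conj_in_isotropy:
  "g \<in> isotropy r s (s h) \<Longrightarrow> mul (mul h g) (iv h) \<in> isotropy r s (r h)"
  unfolding isotropy_def by (simp add: range_mul source_mul)

end

section \<open>Injective gradings\<close>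

locale graded_etale_groupoid = etale_groupoid_space +
  fixes Phi :: "'g::{t2_space, second_countable_topology} \<Rightarrow> 'a::{ab_group_add, countable}"
  assumes graded: "injectively_graded G0 r s mul Phi"
begin

lemma grade_mul: "s g = r h \<Longrightarrow> Phi (mul g h) = Phi g + Phi h"
  using graded unfolding injectively_graded_def groupoid_hom_def by blast

lemma isotropy_grade_eq_0: "g \<in> isotropy r s x \<Longrightarrow> Phi g = 0 \<Longrightarrow> g = x"
  using graded isotropy_eq_empty unfolding injectively_graded_def by blast

lemma grade_unit [simp]: "x \<in> G0 \<Longrightarrow> Phi x = 0"
  using graded unit_in_isotropy unfolding injectively_graded_def by blast

lemma grade_iv [simp]: "Phi (iv g) = - Phi g"
  using grade_mul[of g "iv g"] by (simp add: eq_neg_iff_add_eq_0 add.commute)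

lemma grade_conj: "g \<in> isotropy r s (s h) \<Longrightarrow> Phi (mul (mul h g) (iv h)) = Phi g"
  unfolding isotropy_def by (simp add: grade_mul source_mul)

lemma inj_on_grade_isotropy: "inj_on Phi (isotropy r s x)"
proof (rule inj_onI)
  fix g1 g2 assume g: "g1 \<in> isotropy r s x" "g2 \<in> isotropy r s x" and "Phi g1 = Phi g2"
  have "mul (iv g2) g1 \<in> isotropy r s x"
    using g by (intro mul_in_isotropy iv_in_isotropy)
  moreover have "Phi (mul (iv g2) g1) = 0"
    using g \<open>Phi g1 = Phi g2\<close> unfolding isotropy_def by (simp add: grade_mul)
  ultimately have "mul (iv g2) g1 = x"
    by (rule isotropy_grade_eq_0)
  from g have x: "r g1 = x" "r g2 = x" "s g2 = x"
    unfolding isotropy_def by simp_all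
  have "g1 = mul (r g1) g1"
    by simp
  also have "\<dots> = mul (mul g2 (iv g2)) g1"
    by (simp only: mul_iv_right x)
  also have "\<dots> = mul g2 (mul (iv g2) g1)"
    by (rule mul_assoc) (simp_all add: x)
  also have "\<dots> = g2"
    by (simp only: \<open>mul (iv g2) g1 = x\<close> x(3)[symmetric] mul_source_right)
  finally show "g1 = g2" .
qed

lemma grade_isotropy_source_subset: "Phi ` isotropy r s (s h) \<subseteq> Phi ` isotropy r s (r h)"
proof
  fix a assume "a \<in> Phi ` isotropy r s (s h)"
  then obtain g where g: "g \<in> isotropy r s (s h)" "a = Phi g"
    by blast
  show "a \<in> Phi ` isotropy r s (r h)"
    by (rule rev_image_eqI[OF conj_in_isotropy[OF g(1)]]) (simp add: grade_conj[OF g(1)] g(2))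
qed

lemma grade_isotropy_range_eq_source: "Phi ` isotropy r s (r h) = Phi ` isotropy r s (s h)"
  using grade_isotropy_source_subset[of h] grade_isotropy_source_subset[of "iv h"] by simp

lemma subgroup_grade_isotropy:
  assumes "x \<in> G0"
  shows "subgroup_of (Phi ` isotropy r s x)"
  unfolding subgroup_of_def
proof (intro conjI ballI)
  show "0 \<in> Phi ` isotropy r s x"
    using assms by (intro rev_image_eqI[OF unit_in_isotropy]) simp_all
next
  fix a b assume "a \<in> Phi ` isotropy r s x" "b \<in> Phi ` isotropy r s x"
  then obtain g h where gh: "g \<in> isotropy r s x" "h \<in> isotropy r s x" and "a = Phi g" "b = Phi h"
    by blast
  moreover from gh have "Phi (mul g h) = Phi g + Phi h"
    unfolding isotropy_def by (simp add: grade_mul)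
  ultimately show "a + b \<in> Phi ` isotropy r s x" "- a \<in> Phi ` isotropy r s x"
    by (auto intro: rev_image_eqI[OF mul_in_isotropy] rev_image_eqI[OF iv_in_isotropy])
qed

definition grade_support :: "'a \<Rightarrow> 'g set" where
  "grade_support a = {x \<in> G0. a \<in> Phi ` isotropy r s x}"

lemma grade_support_eq_image: "grade_support a = r ` ({g. r g = s g} \<inter> Phi -` {a})"
proof (intro equalityI subsetI)
  fix x assume "x \<in> grade_support a"
  then obtain g where "r g = x" "s g = x" "Phi g = a"
    unfolding grade_support_def isotropy_def by blast
  then show "x \<in> r ` ({g. r g = s g} \<inter> Phi -` {a})"
    by (intro rev_image_eqI[of g]) auto
next
  fix x assume "x \<in> r ` ({g. r g = s g} \<inter> Phi -` {a})"
  then obtain g where "r g = s g" "Phi g = a" "x = r g"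
    by blast
  then show "x \<in> grade_support a"
    unfolding grade_support_def isotropy_def by (auto intro: rev_image_eqI[of g])
qed

lemma borel_grade_support [measurable]: "grade_support a \<in> sets borel"
proof -
  have "{g. r g = s g} \<in> sets borel"
    using closed_Collect_eq[OF continuous_range continuous_source] by simp
  moreover have "Phi -` {a} \<in> sets borel"
    using graded unfolding injectively_graded_def by simp
  ultimately show ?thesis
    unfolding grade_support_eq_image by (intro borel_image_range sets.Int)
qed

lemma invariant_grade_support: "invariant_set r s (grade_support a)"
  unfolding grade_support_def
  by (rule invariant_set_Collect) (simp add: grade_isotropy_range_eq_source)

lemma X_set_eq_grade_supports:
  "X_set G0 r s Phi C = G0 \<inter> (\<Inter>a\<in>C. grade_support a) - (\<Union>a\<in>- C. grade_support a)"
proof (rule set_eqI)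
  fix x
  have "Phi ` isotropy r s x = C \<longleftrightarrow> (\<forall>a\<in>C. a \<in> Phi ` isotropy r s x) \<and> (\<forall>a\<in>- C. a \<notin> Phi ` isotropy r s x)"
    unfolding set_eq_iff by blast
  then show "x \<in> X_set G0 r s Phi C \<longleftrightarrow> x \<in> G0 \<inter> (\<Inter>a\<in>C. grade_support a) - (\<Union>a\<in>- C. grade_support a)"
    unfolding X_set_def grade_support_def by simp blast
qed

lemma borel_X_set: "X_set G0 r s Phi C \<in> sets borel"
  unfolding X_set_eq_grade_supports
  by (intro sets.Diff sets.Int borel_units sets.countable_INT'' sets.countable_UN'' borel_grade_support)
    (simp_all add: countableI_type)

lemma invariant_X_set: "invariant_set r s (X_set G0 r s Phi C)"
  unfolding X_set_def
  by (rule invariant_set_Collect) (simp add: grade_isotropy_range_eq_source)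

lemma X_set_iff: "x \<in> G0 \<Longrightarrow> x \<in> X_set G0 r s Phi C \<longleftrightarrow> (\<forall>a. x \<in> grade_support a \<longleftrightarrow> a \<in> C)"
  unfolding X_set_def grade_support_def by (simp add: set_eq_iff)

text \<open>\<open>graded_value \<phi> b x\<close> is \<open>\<phi>\<^sub>x(u\<^sub>g)\<close> for the isotropy element \<open>g\<close> at \<open>x\<close> of grade \<open>b\<close>, i.e. \<open>\<phi>\<^sub>x \<circ> \<Phi>\<^sub>x\<^sup>-\<^sup>1\<close>
  on \<open>u\<^sub>b\<close>, extended by \<open>0\<close> to the grades not occurring at \<open>x\<close>.\<close>
definition graded_value :: "('g \<Rightarrow> 'g \<Rightarrow> complex) \<Rightarrow> 'a \<Rightarrow> 'g \<Rightarrow> complex" where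
  "graded_value \<phi> b x =
     (if b \<in> Phi ` isotropy r s x then \<phi> x (the_inv_into (isotropy r s x) Phi b) else 0)"

lemma graded_value_grade: "g \<in> isotropy r s x \<Longrightarrow> graded_value \<phi> (Phi g) x = \<phi> x g"
  unfolding graded_value_def by (simp add: the_inv_into_f_f inj_on_grade_isotropy)

lemma graded_value_eq_0: "b \<notin> Phi ` isotropy r s x \<Longrightarrow> graded_value \<phi> b x = 0"
  unfolding graded_value_def by simp

lemma infsum_isotropy_single_grade:
  fixes \<phi> :: "'g \<Rightarrow> 'g \<Rightarrow> complex"
  assumes "g0 \<in> isotropy r s x" and "\<And>g. Phi g \<noteq> Phi g0 \<Longrightarrow> f g = 0"
  shows "(\<Sum>\<^sub>\<infinity>g\<in>isotropy r s x. f g * \<phi> x g) = f g0 * \<phi> x g0"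
proof -
  have "(\<Sum>\<^sub>\<infinity>g\<in>isotropy r s x. f g * \<phi> x g) = (\<Sum>\<^sub>\<infinity>g\<in>{g0}. f g * \<phi> x g)"
  proof (rule infsum_cong_neutral)
    fix g assume "g \<in> isotropy r s x - {g0}"
    then have "Phi g \<noteq> Phi g0"
      using assms(1) inj_on_grade_isotropy by (auto dest: inj_onD)
    then show "f g * \<phi> x g = 0"
      using assms(2) by simp
  qed (use assms(1) in auto)
  then show ?thesis
    by simp
qed

lemma tendsto_infsum_isotropy_graded_value:
  assumes "\<And>k g. Phi g \<noteq> b \<Longrightarrow> F k g = 0"
    and "\<And>g. Phi g = b \<Longrightarrow> \<forall>\<^sub>F k in sequentially. F k g = 1"
  shows "(\<lambda>k. \<Sum>\<^sub>\<infinity>g\<in>isotropy r s x. F k g * \<phi> x g) \<longlonglongrightarrow> graded_value \<phi> b x"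
proof (cases "b \<in> Phi ` isotropy r s x")
  case True
  then obtain g0 where g0: "g0 \<in> isotropy r s x" "Phi g0 = b"
    by blast
  have "\<forall>\<^sub>F k in sequentially. (\<Sum>\<^sub>\<infinity>g\<in>isotropy r s x. F k g * \<phi> x g) = graded_value \<phi> b x"
    using assms(2)[OF g0(2)]
  proof eventually_elim
    case (elim k)
    then show ?case
      using infsum_isotropy_single_grade[OF g0(1), of "F k"] assms(1) graded_value_grade[OF g0(1)] g0(2)
      by simp
  qed
  then show ?thesis
    by (rule tendsto_eventually)
next
  case False
  then have "F k g = 0" if "g \<in> isotropy r s x" for k g
    using False that by (intro assms(1)) auto
  then have "(\<Sum>\<^sub>\<infinity>g\<in>isotropy r s x. F k g * \<phi> x g) = 0" for k
    by (simp add: infsum_0)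
  then show ?thesis
    using False by (simp add: graded_value_eq_0)
qed

lemma measurable_graded_value:
  assumes "\<And>f. Cc f \<Longrightarrow> (\<lambda>x. \<Sum>\<^sub>\<infinity>g\<in>isotropy r s x. f g * \<phi> x g) \<in> borel_measurable M"
  shows "graded_value \<phi> b \<in> borel_measurable M"
proof -
  have "open (Phi -` {b})"
    using graded unfolding injectively_graded_def by blast
  then obtain F where F: "\<And>k. Cc (F k)" "\<And>k g. g \<notin> Phi -` {b} \<Longrightarrow> F k g = 0"
    "\<And>g. g \<in> Phi -` {b} \<Longrightarrow> \<forall>\<^sub>F k in sequentially. F k g = 1"
    using Cc_eventually_one_on_open[OF locally_compact] by metis
  show ?thesis
  proof (rule borel_measurable_LIMSEQ_metric)
    show "(\<lambda>x. \<Sum>\<^sub>\<infinity>g\<in>isotropy r s x. F k g * \<phi> x g) \<in> borel_measurable M" for k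
      using F(1) by (rule assms)
    show "(\<lambda>k. \<Sum>\<^sub>\<infinity>g\<in>isotropy r s x. F k g * \<phi> x g) \<longlonglongrightarrow> graded_value \<phi> b x" for x
      using F(2,3) by (intro tendsto_infsum_isotropy_graded_value) auto
  qed
qed

lemma graded_value_range_eq_source:
  assumes "\<forall>g\<in>isotropy r s (s h). \<phi> (s h) g = \<phi> (r h) (mul (mul h g) (iv h))"
  shows "graded_value \<phi> b (r h) = graded_value \<phi> b (s h)"
proof (cases "b \<in> Phi ` isotropy r s (s h)")
  case True
  then obtain g where g: "g \<in> isotropy r s (s h)" and "b = Phi g"
    by blast
  then have "graded_value \<phi> b (s h) = \<phi> (s h) g"
    by (simp add: graded_value_grade)
  also have "\<dots> = \<phi> (r h) (mul (mul h g) (iv h))"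
    using assms g by blast
  also have "\<dots> = graded_value \<phi> b (r h)"
    using graded_value_grade[OF conj_in_isotropy[OF g]] grade_conj[OF g] \<open>b = Phi g\<close> by simp
  finally show ?thesis ..
next
  case False
  then show ?thesis
    by (simp add: graded_value_eq_0 grade_isotropy_range_eq_source)
qed

lemma group_state_grade_isotropy:
  assumes "x \<in> G0" and "group_state (isotropy r s x) mul iv x \<psi>x"
    and "\<And>g. g \<in> isotropy r s x \<Longrightarrow> \<psi> (Phi g) = \<psi>x g"
  shows "group_state (Phi ` isotropy r s x) (\<lambda>a b. a + b) uminus 0 \<psi>"
  unfolding group_state_def
proof (intro conjI allI impI)
  show "\<psi> 0 = 1"
    using assms unit_in_isotropy[OF assms(1)] grade_unit[OF assms(1)] unfolding group_state_def
    by metis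
next
  fix n :: nat and bs :: "nat \<Rightarrow> 'a" and cs :: "nat \<Rightarrow> complex"
  assume bs: "\<forall>i<n. bs i \<in> Phi ` isotropy r s x"
  define gs where "gs i = the_inv_into (isotropy r s x) Phi (bs i)" for i
  have gs: "gs i \<in> isotropy r s x" "Phi (gs i) = bs i" if "i < n" for i
    using bs that inj_on_grade_isotropy unfolding gs_def
    by (auto intro: the_inv_into_into f_the_inv_into_f)
  have "\<psi> (- bs j + bs i) = \<psi>x (mul (iv (gs j)) (gs i))" if "i < n" "j < n" for i j
  proof -
    have "mul (iv (gs j)) (gs i) \<in> isotropy r s x"
      using gs that by (intro mul_in_isotropy iv_in_isotropy)
    moreover have "Phi (mul (iv (gs j)) (gs i)) = - bs j + bs i"
      using gs[OF that(1)] gs[OF that(2)] unfolding isotropy_def by (simp add: grade_mul)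
    ultimately show ?thesis
      using assms(3) by metis
  qed
  then have "(\<Sum>i<n. \<Sum>j<n. cs i * cnj (cs j) * \<psi> (- bs j + bs i))
      = (\<Sum>i<n. \<Sum>j<n. cs i * cnj (cs j) * \<psi>x (mul (iv (gs j)) (gs i)))"
    by (intro sum.cong) auto
  moreover have "\<forall>i<n. gs i \<in> isotropy r s x"
    using gs by blast
  then have "let S = \<Sum>i<n. \<Sum>j<n. cs i * cnj (cs j) * \<psi>x (mul (iv (gs j)) (gs i)) in S \<in> \<real> \<and> 0 \<le> Re S"
    using assms(2) unfolding group_state_def by blast
  ultimately show "let S = \<Sum>i<n. \<Sum>j<n. cs i * cnj (cs j) * \<psi> (- bs j + bs i) in S \<in> \<real> \<and> 0 \<le> Re S"
    by (simp only:)
qed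

end

section \<open>Ergodic measures\<close>

locale ergodic_etale_groupoid = etale_groupoid_space +
  fixes \<mu> :: "'g::{t2_space, second_countable_topology} measure"
  assumes regular: "regular_borel_on G0 \<mu>" and ergodic: "ergodic G0 r s \<mu>"
begin

lemma space_eq [simp]: "space \<mu> = G0"
  using regular unfolding regular_borel_on_def by simp

lemma sets_iff_borel_units: "A \<in> sets \<mu> \<longleftrightarrow> A \<in> sets borel \<and> A \<subseteq> G0"
  using regular unfolding regular_borel_on_def by (auto simp: sets_restrict_space_iff)

lemma conull_iff_AE:
  assumes "A \<in> sets borel"
  shows "emeasure \<mu> (G0 - A) = 0 \<longleftrightarrow> (AE x in \<mu>. x \<in> A)"
  using assms by (subst AE_iff_measurable[of "G0 - A"]) (auto simp: sets_iff_borel_units)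

lemma AE_invariant_zero_one:
  assumes "Y \<in> sets borel" and "invariant_set r s Y"
  shows "(AE x in \<mu>. x \<notin> Y) \<or> (AE x in \<mu>. x \<in> Y)"
proof -
  have "Y \<in> sets \<mu>"
    using assms invariant_set_subset_units by (simp add: sets_iff_borel_units)
  then have "emeasure \<mu> Y = 0 \<or> emeasure \<mu> (G0 - Y) = 0"
    using ergodic assms(2) unfolding ergodic_def by blast
  then show ?thesis
    using \<open>Y \<in> sets \<mu>\<close> by (metis AE_iff_null_sets conull_iff_AE assms(1) null_setsI)
qed

text \<open>The saturation of the measurable part of \<open>L\<close> is an invariant Borel set almost equal to \<open>L\<close>.\<close>

lemma AE_invariant_mod_null_zero_one:
  assumes L: "L \<in> sets (completion \<mu>)" and "N \<in> null_sets \<mu>"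
    and inv: "\<And>h. s h \<notin> N \<Longrightarrow> s h \<in> L \<Longrightarrow> r h \<in> L"
  shows "(AE x in \<mu>. x \<notin> L) \<or> (AE x in \<mu>. x \<in> L)"
proof -
  define L' where "L' = main_part \<mu> L - N"
  have "L' \<in> sets \<mu>"
    unfolding L'_def using L \<open>N \<in> null_sets \<mu>\<close> by auto
  have L'_ae: "AE x in \<mu>. x \<in> L' \<longleftrightarrow> x \<in> L"
    using AE_in_main_part[OF L] AE_not_in[OF \<open>N \<in> null_sets \<mu>\<close>]
    by eventually_elim (auto simp: L'_def)
  define Y where "Y = r ` (s -` L')"
  have L'_Y: "L' \<subseteq> Y"
  proof
    fix x assume "x \<in> L'"
    moreover from this have "x \<in> G0"
      using \<open>L' \<in> sets \<mu>\<close> by (simp add: sets_iff_borel_units subset_iff)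
    ultimately show "x \<in> Y"
      unfolding Y_def by (intro rev_image_eqI[of x]) simp_all
  qed
  have Y_L: "Y \<subseteq> L"
  proof
    fix y assume "y \<in> Y"
    then obtain h where "y = r h" "s h \<in> L'"
      unfolding Y_def by blast
    moreover have "main_part \<mu> L \<subseteq> L"
      using main_part_null_part_Un[OF L] by blast
    ultimately show "y \<in> L"
      using inv unfolding L'_def by blast
  qed
  have "Y \<in> sets borel"
  proof -
    have "s \<in> borel_measurable borel"
      by (rule borel_measurable_continuous_onI[OF continuous_source])
    then have "s -` L' \<in> sets borel"
      using measurable_sets[of s borel borel L'] \<open>L' \<in> sets \<mu>\<close> by (simp add: sets_iff_borel_units)
    then show ?thesis
      unfolding Y_def by (rule borel_image_range)
  qed
  from AE_invariant_zero_one[OF this invariant_set_saturation[of L', folded Y_def]] show ?thesis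
  proof (elim disjE)
    assume "AE x in \<mu>. x \<notin> Y"
    with L'_ae have "AE x in \<mu>. x \<notin> L"
      by eventually_elim (use L'_Y in auto)
    then show ?thesis ..
  next
    assume "AE x in \<mu>. x \<in> Y"
    then have "AE x in \<mu>. x \<in> L"
      by eventually_elim (use Y_L in auto)
    then show ?thesis ..
  qed
qed

lemma AE_eq_const_of_invariant_mod_null:
  fixes F :: "'g \<Rightarrow> 'b::{t0_space, second_countable_topology}"
  assumes "F \<in> borel_measurable (completion \<mu>)" and "N \<in> null_sets \<mu>"
    and "\<And>h. s h \<notin> N \<Longrightarrow> F (r h) = F (s h)"
    and "emeasure \<mu> G0 \<noteq> 0"
  shows "\<exists>c. AE x in \<mu>. F x = c"
proof (rule AE_eq_const_of_zero_one)
  fix S :: "'b set" assume "open S"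
  have "F -` S \<inter> G0 \<in> sets (completion \<mu>)"
    using measurable_sets[OF assms(1) borel_open[OF \<open>open S\<close>]] by simp
  then have "(AE x in \<mu>. x \<notin> F -` S \<inter> G0) \<or> (AE x in \<mu>. x \<in> F -` S \<inter> G0)"
    by (rule AE_invariant_mod_null_zero_one[OF _ assms(2)]) (use assms(3) in auto)
  then show "(AE x in \<mu>. F x \<in> S) \<or> (AE x in \<mu>. F x \<notin> S)"
  proof (elim disjE)
    assume "AE x in \<mu>. x \<notin> F -` S \<inter> G0"
    with AE_space[of \<mu>] have "AE x in \<mu>. F x \<notin> S"
      by eventually_elim auto
    then show ?thesis ..
  next
    assume "AE x in \<mu>. x \<in> F -` S \<inter> G0"
    then have "AE x in \<mu>. F x \<in> S"
      by eventually_elim auto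
    then show ?thesis ..
  qed
qed (use assms(4) in simp)

end

locale ergodic_graded_groupoid = graded_etale_groupoid + ergodic_etale_groupoid
begin

lemma conull_X_set_iff:
  "emeasure \<mu> (G0 - X_set G0 r s Phi B) = 0 \<longleftrightarrow> (AE x in \<mu>. x \<in> X_set G0 r s Phi B)"
  by (rule conull_iff_AE[OF borel_X_set])

lemma ex_AE_X_set: "\<exists>B. AE x in \<mu>. x \<in> X_set G0 r s Phi B"
proof -
  define B where "B = {a. AE x in \<mu>. x \<in> grade_support a}"
  have "AE x in \<mu>. x \<in> grade_support a \<longleftrightarrow> a \<in> B" for a
  proof (cases "a \<in> B")
    case True
    then show ?thesis
      unfolding B_def by (auto elim: AE_mp)
  next
    case False
    then have "AE x in \<mu>. x \<notin> grade_support a"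
      using AE_invariant_zero_one[OF borel_grade_support invariant_grade_support]
      unfolding B_def by blast
    then show ?thesis
      by eventually_elim (simp add: False)
  qed
  then have "AE x in \<mu>. \<forall>a. x \<in> grade_support a \<longleftrightarrow> a \<in> B"
    by (simp add: AE_all_countable)
  with AE_space[of \<mu>] have "AE x in \<mu>. x \<in> X_set G0 r s Phi B"
    by eventually_elim (simp add: X_set_iff)
  then show ?thesis ..
qed

lemma AE_X_setE:
  assumes "emeasure \<mu> G0 \<noteq> 0" and "AE x in \<mu>. x \<in> X_set G0 r s Phi B \<and> P x"
  obtains x where "x \<in> G0" "Phi ` isotropy r s x = B" "P x"
  using AE_imp_ex_in_space[OF assms(2)] assms(1) unfolding X_set_def by auto

lemma ex1_subgroup_conull_X_set:
  assumes "emeasure \<mu> G0 \<noteq> 0"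
  shows "\<exists>!B. subgroup_of B \<and> emeasure \<mu> (G0 - X_set G0 r s Phi B) = 0"
proof -
  obtain B where B: "AE x in \<mu>. x \<in> X_set G0 r s Phi B"
    using ex_AE_X_set ..
  then obtain x where "x \<in> G0" "Phi ` isotropy r s x = B"
    using AE_X_setE[OF assms, of B "\<lambda>_. True"] by auto
  then have "subgroup_of B"
    using subgroup_grade_isotropy by blast
  moreover have "B' = B" if "AE x in \<mu>. x \<in> X_set G0 r s Phi B'" for B'
  proof -
    from that B have "AE x in \<mu>. x \<in> X_set G0 r s Phi B' \<and> B' = B"
      by eventually_elim (simp add: X_set_def)
    then show ?thesis
      by (rule AE_X_setE[OF assms])
  qed
  ultimately show ?thesis
    using B unfolding conull_X_set_iff by blast
qed

lemma ex_state_of_invariant_field: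
  assumes "emeasure \<mu> G0 \<noteq> 0" and "AE x in \<mu>. x \<in> X_set G0 r s Phi B"
    and field: "measurable_state_field G0 r s mul iv \<mu> \<phi>"
    and "AE x in \<mu>. \<forall>g\<in>isotropy r s x. \<forall>h. s h = x \<longrightarrow> \<phi> x g = \<phi> (r h) (mul (mul h g) (iv h))"
  shows "\<exists>\<psi>. group_state B (\<lambda>a b. a + b) uminus 0 \<psi> \<and>
    (AE x in \<mu>. \<forall>g\<in>isotropy r s x. \<psi> (Phi g) = \<phi> x g)"
proof -
  obtain N where N: "N \<in> null_sets \<mu>" and conj_invariant:
    "\<And>x. x \<in> G0 - N \<Longrightarrow> \<forall>g\<in>isotropy r s x. \<forall>h. s h = x \<longrightarrow> \<phi> x g = \<phi> (r h) (mul (mul h g) (iv h))"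
    using assms(4) unfolding eventually_ae_filter by auto
  have "\<exists>c. AE x in \<mu>. graded_value \<phi> b x = c" for b
  proof (rule AE_eq_const_of_invariant_mod_null[OF _ N _ assms(1)])
    show "graded_value \<phi> b \<in> borel_measurable (completion \<mu>)"
      using field unfolding measurable_state_field_def by (intro measurable_graded_value) blast
    show "graded_value \<phi> b (r h) = graded_value \<phi> b (s h)" if "s h \<notin> N" for h
      using conj_invariant[of "s h"] that by (intro graded_value_range_eq_source) simp
  qed
  then obtain \<psi> where "\<And>b. AE x in \<mu>. graded_value \<phi> b x = \<psi> b"
    by metis
  then have "AE x in \<mu>. \<forall>b. graded_value \<phi> b x = \<psi> b"
    by (simp add: AE_all_countable)
  then have agree: "AE x in \<mu>. \<forall>g\<in>isotropy r s x. \<psi> (Phi g) = \<phi> x g"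
    by eventually_elim (metis graded_value_grade)
  with assms(2) have "AE x in \<mu>. x \<in> X_set G0 r s Phi B \<and> (\<forall>g\<in>isotropy r s x. \<psi> (Phi g) = \<phi> x g)"
    by eventually_elim simp
  then obtain x where "x \<in> G0" "Phi ` isotropy r s x = B" "\<forall>g\<in>isotropy r s x. \<psi> (Phi g) = \<phi> x g"
    by (rule AE_X_setE[OF assms(1)])
  then have "group_state B (\<lambda>a b. a + b) uminus 0 \<psi>"
    using field unfolding measurable_state_field_def by (metis group_state_grade_isotropy)
  with agree show ?thesis
    by blast
qed

end

theorem theorem7p3:
  fixes G0 :: "'g::{t2_space, second_countable_topology} set"
    and r s :: "'g \<Rightarrow> 'g" and mul :: "'g \<Rightarrow> 'g \<Rightarrow> 'g" and iv :: "'g \<Rightarrow> 'g"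
    and Phi :: "'g \<Rightarrow> 'a::{ab_group_add, countable}"
    and c :: "'g \<Rightarrow> real" and \<beta> :: real and \<mu> :: "'g measure"
  assumes G: "etale_groupoid G0 r s mul iv"
    and grading: "injectively_graded G0 r s mul Phi"
    and c_cont: "continuous_on UNIV c" and c_hom: "groupoid_hom r s mul c"
    and mu_Delta: "Delta G0 r s c \<beta> \<mu>"
    and mu_nonzero: "emeasure \<mu> G0 \<noteq> 0"
    and mu_erg: "ergodic G0 r s \<mu>"
  shows
    "(\<forall>C. subgroup_of C \<longrightarrow>
          X_set G0 r s Phi C \<in> sets borel \<and> invariant_set r s (X_set G0 r s Phi C))
     \<and> (\<exists>!B. subgroup_of B \<and> emeasure \<mu> (G0 - X_set G0 r s Phi B) = 0)
     \<and> (\<forall>B. subgroup_of B \<and> emeasure \<mu> (G0 - X_set G0 r s Phi B) = 0 \<longrightarrow>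
          (\<forall>\<phi>. measurable_state_field G0 r s mul iv \<mu> \<phi> \<and>
               (AE x in \<mu>. \<forall>g\<in>isotropy r s x. \<forall>h. s h = x \<longrightarrow>
                  \<phi> x g = \<phi> (r h) (mul (mul h g) (iv h)))
             \<longrightarrow> (\<exists>\<psi>. group_state B (\<lambda>a b. a + b) uminus 0 \<psi> \<and>
                   (AE x in \<mu>. x \<in> X_set G0 r s Phi B \<longrightarrow>
                      (\<forall>g\<in>isotropy r s x. \<psi> (Phi g) = \<phi> x g)))))"
proof -
  interpret ergodic_graded_groupoid G0 r s mul iv Phi \<mu>
    using G grading mu_Delta mu_erg unfolding Delta_def by unfold_locales auto
  show ?thesis
  proof (intro conjI allI impI)
    show "X_set G0 r s Phi C \<in> sets borel" "invariant_set r s (X_set G0 r s Phi C)" for C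
      by (rule borel_X_set, rule invariant_X_set)
    show "\<exists>!B. subgroup_of B \<and> emeasure \<mu> (G0 - X_set G0 r s Phi B) = 0"
      by (rule ex1_subgroup_conull_X_set[OF mu_nonzero])
  next
    fix B \<phi>
    assume "subgroup_of B \<and> emeasure \<mu> (G0 - X_set G0 r s Phi B) = 0"
      and "measurable_state_field G0 r s mul iv \<mu> \<phi> \<and>
        (AE x in \<mu>. \<forall>g\<in>isotropy r s x. \<forall>h. s h = x \<longrightarrow> \<phi> x g = \<phi> (r h) (mul (mul h g) (iv h)))"
    then obtain \<psi> where "group_state B (\<lambda>a b. a + b) uminus 0 \<psi>"
      and "AE x in \<mu>. \<forall>g\<in>isotropy r s x. \<psi> (Phi g) = \<phi> x g"
      using ex_state_of_invariant_field[OF mu_nonzero] conull_X_set_iff by blast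
    then show "\<exists>\<psi>. group_state B (\<lambda>a b. a + b) uminus 0 \<psi> \<and>
        (AE x in \<mu>. x \<in> X_set G0 r s Phi B \<longrightarrow> (\<forall>g\<in>isotropy r s x. \<psi> (Phi g) = \<phi> x g))"
      by (auto elim: AE_mp)
  qed
qed

end
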